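(* Let $p$ be a prime, $m\in\{1,\ldots,p-1\}$, $d\ge 0$ an integer, and $n=mp^d$. Then for every $i\in\mathbb{Z}_p$, \[ c_{p,i}(n)=\begin{cases} 2^{n-m}\,|\{\gamma\models m: r_\gamma\equiv i\pmod p\}| & \text{if } i=0 \text{ or } p=2 \text{ or } d=0,\\ 2^{n-m-1}\,|\{\gamma\models m: r_\gamma\equiv i \text{ or } r_\gamma\equiv -i\pmod p\}| & \text{otherwise.}\end{cases} \]
   Context: For a permutation $w$ of $[n]$, $D(w)=\{i\in[n-1]: w(i)>w(i+1)\}$. A composition $\alpha=(\alpha_1,\ldots,\alpha_\ell)$ of $n$ (written $\alpha\models n$) is a sequence of positive integers with sum $n$, with descent set $D(\alpha)=\{\alpha_1,\alpha_1+\alpha_2,\ldots,\alpha_1+\cdots+\alpha_{\ell-1}\}$. The ribbon number is $r_\alpha=|\{w\in\mathfrak{S}_n: D(w)=D(\alpha)\}|$, and for $i\in\mathbb{Z}_p$, $c_{p,i}(n)=|\{\alpha\models n: r_\alpha\equiv i\pmod p\}|$. *)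

theory Defs
  imports "HOL-Combinatorics.Combinatorics" "HOL-Number_Theory.Number_Theory"
begin

definition compositions :: "nat \<Rightarrow> nat list set" where
  "compositions n = {\<alpha>. (\<forall>a\<in>set \<alpha>. a > 0) \<and> sum_list \<alpha> = n}"

definition comp_descents :: "nat list \<Rightarrow> nat set" where
  "comp_descents \<alpha> = {sum_list (take j \<alpha>) | j. 1 \<le> j \<and> j < length \<alpha>}"

definition perm_descents :: "nat \<Rightarrow> (nat \<Rightarrow> nat) \<Rightarrow> nat set" where
  "perm_descents n w = {i \<in> {1..n-1}. w i > w (i+1)}"

definition ribbon :: "nat list \<Rightarrow> nat" where
  "ribbon \<alpha> = card {w. w permutes {1..sum_list \<alpha>} \<and>
                        perm_descents (sum_list \<alpha>) w = comp_descents \<alpha>}"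

definition c_count :: "nat \<Rightarrow> int \<Rightarrow> nat \<Rightarrow> nat" where
  "c_count p i n = card {\<alpha> \<in> compositions n. [int (ribbon \<alpha>) = i] (mod int p)}"

end

theory Submission
  imports Defs "HOL-Library.Infinite_Set"
begin

(* Write beta_n(D) for the number of permutations of [n] with descent set D, so that
   r_alpha = beta_n(D(alpha)), and alpha_n(S) = sum_{T <= S} beta_n(T) for the number with descents
   inside S. Cutting a permutation after its last allowed descent s = max S gives
   alpha_n(S) = (n choose s) alpha_s(S - {s}). Let q = p^d. Since (q a choose k) is congruent mod p
   to (a choose k/q) if q divides k and to 0 otherwise (Lucas), induction gives
   alpha_{qa}(S) = 0 unless S consists of multiples of q, and alpha_{qa}(qT) = alpha_a(T) mod p.
   Moebius inversion of alpha into beta then yields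
     beta_{qm}(D) = (-1)^|D - qN| beta_m({j. qj in D})  (mod p).
   A descent set D of a composition of n = qm is a descent set T of a composition of m, scaled by q,
   together with an arbitrary set X of the n - m non-multiples of q, and its ribbon number is
   +-r_T mod p with sign (-1)^|X|. Half of the 2^(n-m) sets X have each parity; when i = -i mod p
   or there are no non-multiples (d = 0) the sign does not matter. *)

lemma card_filter_bij_betw:
  assumes "bij_betw f A B"
  shows "card {a \<in> A. P (f a)} = card {b \<in> B. P b}"
proof -
  have "f ` {a \<in> A. P (f a)} = {b \<in> f ` A. P b}"
    by blast
  with assms have "bij_betw f {a \<in> A. P (f a)} {b \<in> B. P b}"
    by (auto simp: bij_betw_def intro: inj_on_subset)
  then show ?thesis
    by (rule bij_betw_same_card)
qed

section \<open>Descents of lists\<close>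

(* Positions are numbered from 1 as in perm_descents: a permutation w of [n] corresponds to the
   list map w [1..<n+1]. *)
definition list_descents :: "nat list \<Rightarrow> nat set" where
  "list_descents xs = {i. 1 \<le> i \<and> i < length xs \<and> xs ! i < xs ! (i - 1)}"

(* The numbers beta_n(D) and alpha_A(S) of the proof sketch; alpha is taken over an arbitrary
   finite set A of letters, which the recursion on the last block needs. *)
definition count_descents_eq :: "nat \<Rightarrow> nat set \<Rightarrow> nat" where
  "count_descents_eq n D = card {xs \<in> permutations_of_set {1..n}. list_descents xs = D}"

definition count_descents_subset :: "nat set \<Rightarrow> nat set \<Rightarrow> nat" where
  "count_descents_subset A S = card {xs \<in> permutations_of_set A. list_descents xs \<subseteq> S}"

lemma list_descents_map_upt: "list_descents (map w [1..<n+1]) = perm_descents n w"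
  unfolding list_descents_def perm_descents_def
  by (auto simp del: upt_Suc)

lemma bij_betw_map_upt_permutations:
  "bij_betw (\<lambda>w. map w [1..<n+1]) {w. w permutes {1..n}} (permutations_of_set {1..n})"
proof -
  let ?f = "\<lambda>w. map w [1..<n+1]"
  have "inj_on ?f {w. w permutes {1..n}}"
  proof (rule inj_onI)
    fix w v assume "w \<in> {w. w permutes {1..n}}" "v \<in> {w. w permutes {1..n}}" "?f w = ?f v"
    then have "w x = v x" if "x \<in> {1..n}" for x
      using that by (auto simp del: upt_Suc)
    then show "w = v"
      using \<open>w \<in> _\<close> \<open>v \<in> _\<close> by (metis mem_Collect_eq permutes_not_in ext)
  qed
  moreover have "?f ` {w. w permutes {1..n}} \<subseteq> permutations_of_set {1..n}"
  proof clarify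
    fix w assume "w permutes {1..n}"
    then have "?f w \<in> map w ` permutations_of_set {1..n}"
      by (intro imageI) (auto simp: permutations_of_set_def simp del: upt_Suc)
    then show "?f w \<in> permutations_of_set {1..n}"
      using permutations_of_set_image_permutes[OF \<open>w permutes {1..n}\<close>] by simp
  qed
  moreover have "card {w. w permutes {1..n}} = card (permutations_of_set {1..n})"
    by (simp add: card_permutations)
  ultimately show ?thesis
    by (simp add: bij_betw_def card_subset_eq card_image)
qed

lemma list_descents_subset: "list_descents xs \<subseteq> {1..<length xs}"
  by (auto simp: list_descents_def)

lemma list_descents_append:
  "list_descents (ys @ zs) - {length ys} = list_descents ys \<union> (+) (length ys) ` list_descents zs"
proof -
  have eq: "i \<in> list_descents (ys @ zs) \<longleftrightarrow> i \<in> list_descents ys \<union> (+) (length ys) ` list_descents zs"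
    if "i \<noteq> length ys" for i
    using that by (cases "i < length ys")
      (auto simp: list_descents_def nth_append image_iff Suc_diff_Suc intro!: exI[of _ "i - length ys"])
  have notin: "length ys \<notin> list_descents ys \<union> (+) (length ys) ` list_descents zs"
    using list_descents_subset[of ys] list_descents_subset[of zs] by auto
  show ?thesis
  proof (rule Set.set_eqI)
    fix i
    show "i \<in> list_descents (ys @ zs) - {length ys} \<longleftrightarrow>
          i \<in> list_descents ys \<union> (+) (length ys) ` list_descents zs"
      using eq[of i] notin by (cases "i = length ys") auto
  qed
qed

lemma list_descents_empty_iff_sorted: "list_descents xs = {} \<longleftrightarrow> sorted xs"
proof -
  have "Suc i \<in> list_descents xs \<longleftrightarrow> Suc i < length xs \<and> xs ! Suc i < xs ! i" for i
    by (simp add: list_descents_def)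
  moreover have "0 \<notin> list_descents xs"
    by (simp add: list_descents_def)
  ultimately have "list_descents xs = {} \<longleftrightarrow> (\<forall>i. \<not> (Suc i < length xs \<and> xs ! Suc i < xs ! i))"
    by (metis all_not_in_conv not0_implies_Suc)
  then show ?thesis
    unfolding sorted_iff_nth_Suc by (meson not_less)
qed

lemma list_descents_map_strict_mono:
  "strict_mono_on (set xs) f \<Longrightarrow> list_descents (map f xs) = list_descents xs"
  unfolding list_descents_def by (auto simp: strict_mono_on_less)

lemma list_descents_subset_iff_split:
  assumes "s \<in> S" "\<forall>x\<in>S. x \<le> s" "s \<le> length xs"
  shows "list_descents xs \<subseteq> S \<longleftrightarrow>
    list_descents (take s xs) \<subseteq> S - {s} \<and> sorted (drop s xs)"
proof -
  have split: "list_descents xs - {s} = list_descents (take s xs) \<union> (+) s ` list_descents (drop s xs)"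
    using list_descents_append[of "take s xs" "drop s xs"] assms(3) by simp
  have "list_descents (take s xs) \<subseteq> {1..<s}" "list_descents (drop s xs) \<subseteq> {1..}"
    using list_descents_subset[of "take s xs"] list_descents_subset[of "drop s xs"] assms(3) by auto
  then have "(+) s ` list_descents (drop s xs) \<subseteq> S - {s} \<longleftrightarrow> list_descents (drop s xs) = {}"
    "list_descents (take s xs) \<inter> {s} = {}"
    using assms(2) by fastforce+
  then show ?thesis
    using split assms(1) by (auto simp: list_descents_empty_iff_sorted[symmetric])
qed

section \<open>Compositions and their descent sets\<close>

lemma Cons_in_compositions_iff:
  "a # \<alpha> \<in> compositions n \<longleftrightarrow> 0 < a \<and> a \<le> n \<and> \<alpha> \<in> compositions (n - a)"
  by (auto simp: compositions_def)

lemma compositions_0: "compositions 0 = {[]}"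
  by (auto simp: compositions_def) (metis last_in_set less_not_refl)

lemma comp_descents_Nil [simp]: "comp_descents [] = {}"
  by (simp add: comp_descents_def)

lemma comp_descents_Cons:
  "comp_descents (a # \<alpha>) = (if \<alpha> = [] then {} else insert a ((+) a ` comp_descents \<alpha>))"
proof (cases "\<alpha> = []")
  case False
  have "x \<in> comp_descents (a # \<alpha>) \<longleftrightarrow> x \<in> insert a ((+) a ` comp_descents \<alpha>)" for x
  proof
    assume "x \<in> comp_descents (a # \<alpha>)"
    then obtain j where j: "1 \<le> j" "j < Suc (length \<alpha>)" "x = sum_list (take j (a # \<alpha>))"
      by (auto simp: comp_descents_def)
    show "x \<in> insert a ((+) a ` comp_descents \<alpha>)"
    proof (cases "j = 1")
      case False
      then obtain j' where "j = Suc j'" "1 \<le> j'" using j by (cases j) auto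
      then show ?thesis using j by (auto simp: comp_descents_def)
    qed (use j in simp)
  next
    assume "x \<in> insert a ((+) a ` comp_descents \<alpha>)"
    then consider "x = a" | j where "1 \<le> j" "j < length \<alpha>" "x = a + sum_list (take j \<alpha>)"
      by (auto simp: comp_descents_def)
    then show "x \<in> comp_descents (a # \<alpha>)"
    proof cases
      case 1
      then show ?thesis using False by (auto simp: comp_descents_def intro!: exI[of _ 1])
    next
      case (2 j)
      then show ?thesis by (auto simp: comp_descents_def intro!: exI[of _ "Suc j"])
    qed
  qed
  then show ?thesis using False by (simp add: set_eq_iff)
qed (simp add: comp_descents_def)

lemma comp_descents_subset: "\<alpha> \<in> compositions n \<Longrightarrow> comp_descents \<alpha> \<subseteq> {1..<n}"
proof (induction \<alpha> arbitrary: n)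
  case (Cons a \<alpha>)
  then have "0 < a" and IH: "comp_descents \<alpha> \<subseteq> {1..<n - a}"
    by (auto simp: Cons_in_compositions_iff)
  moreover have "\<alpha> \<noteq> [] \<Longrightarrow> a < n"
    using Cons.prems by (cases \<alpha>) (auto simp: compositions_def)
  ultimately show ?case
    by (auto simp: comp_descents_Cons less_diff_conv)
qed simp

lemma comp_descents_eq_empty_iff:
  "\<alpha> \<in> compositions n \<Longrightarrow> comp_descents \<alpha> = {} \<longleftrightarrow> \<alpha> = [] \<or> \<alpha> = [n]"
  by (cases \<alpha>) (auto simp: comp_descents_Cons compositions_def)

lemma Min_comp_descents_Cons:
  assumes "a # \<alpha> \<in> compositions n" "\<alpha> \<noteq> []"
  shows "Min (comp_descents (a # \<alpha>)) = a"
  using comp_descents_subset[of \<alpha> "n - a"] assms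
  by (intro Min_eqI) (auto simp: comp_descents_Cons Cons_in_compositions_iff finite_subset)

lemma inj_on_comp_descents: "inj_on comp_descents (compositions n)"
proof (intro inj_onI)
  fix \<alpha> \<beta> assume "\<alpha> \<in> compositions n" "\<beta> \<in> compositions n" "comp_descents \<alpha> = comp_descents \<beta>"
  then show "\<alpha> = \<beta>"
  proof (induction \<alpha> arbitrary: n \<beta>)
    case Nil
    then show ?case
      using comp_descents_eq_empty_iff[of \<beta> n] by (auto simp: compositions_def)
  next
    case (Cons a \<alpha>)
    show ?case
    proof (cases "comp_descents (a # \<alpha>) = {}")
      case True
      then have "\<alpha> = []" "\<beta> = [n]" "a = n"
        using Cons.prems comp_descents_eq_empty_iff[of \<beta> n] comp_descents_eq_empty_iff[of "a # \<alpha>" n]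
        by (auto simp: compositions_def)
      then show ?thesis by simp
    next
      case False
      then have "\<alpha> \<noteq> []"
        by (auto simp: comp_descents_Cons)
      moreover obtain b \<beta>' where "\<beta> = b # \<beta>'"
        using Cons.prems(1,2) by (cases \<beta>) (auto simp: compositions_def)
      moreover have "\<beta>' \<noteq> []"
        using False Cons.prems(3) \<open>\<beta> = b # \<beta>'\<close> by (auto simp: comp_descents_Cons)
      ultimately have \<beta>: "\<beta> = b # \<beta>'" "\<alpha> \<noteq> []" "\<beta>' \<noteq> []"
        by auto
      have "a = b"
        using Min_comp_descents_Cons[of a \<alpha> n] Min_comp_descents_Cons[of b \<beta>' n] Cons.prems \<beta> by simp
      have "a \<notin> (+) a ` comp_descents \<alpha>" "a \<notin> (+) a ` comp_descents \<beta>'"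
        using comp_descents_subset[of \<alpha> "n - a"] comp_descents_subset[of \<beta>' "n - b"] Cons.prems \<beta>
        by (auto simp: Cons_in_compositions_iff)
      moreover have "insert a ((+) a ` comp_descents \<alpha>) = insert a ((+) a ` comp_descents \<beta>')"
        using Cons.prems \<beta> \<open>a = b\<close> by (simp add: comp_descents_Cons)
      ultimately have "(+) a ` comp_descents \<alpha> = (+) a ` comp_descents \<beta>'"
        by (metis insert_ident)
      then have "comp_descents \<alpha> = comp_descents \<beta>'"
        by (simp add: inj_image_eq_iff)
      then show ?thesis
        using Cons.IH[of "n - a" \<beta>'] Cons.prems \<beta> \<open>a = b\<close> by (simp add: Cons_in_compositions_iff)
    qed
  qed
qed

lemma comp_descents_surj: "D \<subseteq> {1..<n} \<Longrightarrow> \<exists>\<alpha>\<in>compositions n. comp_descents \<alpha> = D"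
proof (induction n arbitrary: D rule: less_induct)
  case (less n)
  show ?case
  proof (cases "D = {}")
    case True
    show ?thesis
    proof (cases "n = 0")
      case False
      then show ?thesis
        using \<open>D = {}\<close> by (intro bexI[of _ "[n]"]) (auto simp: compositions_def comp_descents_Cons)
    qed (simp add: compositions_0 \<open>D = {}\<close>)
  next
    case False
    define a where "a = Min D"
    have "finite D"
      using less.prems finite_subset by blast
    then have a: "a \<in> D" "\<And>x. x \<in> D \<Longrightarrow> a \<le> x"
      using False by (auto simp: a_def)
    with less.prems have "0 < a" "a < n"
      by auto
    define D' where "D' = (\<lambda>x. x - a) ` (D - {a})"
    have "D' \<subseteq> {1..<n - a}"
      using less.prems a by (force simp: D'_def)
    with less.IH[of "n - a" D'] \<open>0 < a\<close> \<open>a < n\<close>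
    obtain \<beta> where \<beta>: "\<beta> \<in> compositions (n - a)" "comp_descents \<beta> = D'"
      by auto
    have "\<beta> \<noteq> []"
      using \<beta>(1) \<open>a < n\<close> by (auto simp: compositions_def)
    moreover have "(+) a ` D' = D - {a}"
      using a by (force simp: D'_def image_image)
    ultimately have "comp_descents (a # \<beta>) = D"
      using \<beta>(2) a(1) by (auto simp: comp_descents_Cons)
    moreover have "a # \<beta> \<in> compositions n"
      using \<beta>(1) \<open>0 < a\<close> \<open>a < n\<close> by (simp add: Cons_in_compositions_iff)
    ultimately show ?thesis
      by blast
  qed
qed

lemma bij_betw_comp_descents: "bij_betw comp_descents (compositions n) (Pow {1..<n})"
proof -
  have "comp_descents ` compositions n = Pow {1..<n}"
    using comp_descents_subset comp_descents_surj by blast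
  then show ?thesis
    by (simp add: bij_betw_def inj_on_comp_descents)
qed

lemma finite_compositions: "finite (compositions n)"
  using bij_betw_finite[OF bij_betw_comp_descents] by simp

lemma ribbon_eq_count_descents_eq:
  assumes "\<alpha> \<in> compositions n"
  shows "ribbon \<alpha> = count_descents_eq n (comp_descents \<alpha>)"
proof -
  have "card {w \<in> {w. w permutes {1..n}}. list_descents (map w [1..<n+1]) = comp_descents \<alpha>} =
        count_descents_eq n (comp_descents \<alpha>)"
    unfolding count_descents_eq_def by (rule card_filter_bij_betw[OF bij_betw_map_upt_permutations])
  then show ?thesis
    using assms unfolding ribbon_def list_descents_map_upt by (simp add: compositions_def)
qed

section \<open>Permutations with descents in a given set\<close>

lemma count_descents_subset_eq_sum:
  assumes "finite S"
  shows "count_descents_subset {1..n} S = (\<Sum>T\<in>Pow S. count_descents_eq n T)"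
proof -
  let ?L = "\<lambda>T. {xs \<in> permutations_of_set {1..n}. list_descents xs = T}"
  have "{xs \<in> permutations_of_set {1..n}. list_descents xs \<subseteq> S} = (\<Union>T\<in>Pow S. ?L T)"
    by blast
  then show ?thesis
    unfolding count_descents_subset_def count_descents_eq_def
    using assms by (simp add: card_UN_disjoint disjoint_iff)
qed

lemma count_descents_eq_alternating_sum:
  assumes "finite D"
  shows "int (count_descents_eq n D) =
    (\<Sum>S\<in>Pow D. (-1) ^ (card D - card S) * int (count_descents_subset {1..n} S))"
  using assms
  by (intro inclusion_exclusion_mobius) (simp_all only: count_descents_subset_eq_sum of_nat_sum)

lemma count_descents_subset_empty:
  assumes "finite A"
  shows "count_descents_subset A {} = 1"
proof -
  have "{xs \<in> permutations_of_set A. list_descents xs \<subseteq> {}} = {sorted_list_of_set A}"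
    using assms
    by (auto simp: permutations_of_set_def list_descents_empty_iff_sorted
        sorted_list_of_set_sort_remdups distinct_remdups_id sorted_sort_id)
  then show ?thesis
    by (simp add: count_descents_subset_def)
qed

lemma count_descents_subset_strict_mono_image:
  assumes "strict_mono_on A f"
  shows "count_descents_subset (f ` A) S = count_descents_subset A S"
proof -
  have inj: "inj_on f A"
    using assms by (rule strict_mono_on_imp_inj_on)
  have "inj_on (map f) (permutations_of_set A)"
    by (rule inj_on_mapI, rule inj_on_subset[OF inj]) (auto dest: permutations_of_setD)
  then have "bij_betw (map f) (permutations_of_set A) (permutations_of_set (f ` A))"
    by (simp add: bij_betw_def permutations_of_set_image_inj[OF inj])
  then have "card {xs \<in> permutations_of_set A. list_descents (map f xs) \<subseteq> S} =
             count_descents_subset (f ` A) S"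
    unfolding count_descents_subset_def by (rule card_filter_bij_betw)
  moreover have "list_descents (map f xs) = list_descents xs" if "xs \<in> permutations_of_set A" for xs
    using that assms by (intro list_descents_map_strict_mono) (simp add: permutations_of_set_def)
  ultimately show ?thesis
    unfolding count_descents_subset_def by (metis (no_types, lifting) Collect_cong)
qed

lemma count_descents_subset_card:
  assumes "finite A"
  shows "count_descents_subset A S = count_descents_subset {1..card A} S"
proof -
  have "count_descents_subset B S = count_descents_subset {..<card B} S" if B: "finite B" for B :: "nat set"
  proof -
    obtain h where "bij_betw h {..<card B} B" "strict_mono_on {..<card B} h"
      using ex_bij_betw_strict_mono_card[OF B] .
    then show ?thesis
      by (metis bij_betw_imp_surj_on count_descents_subset_strict_mono_image)
  qed
  from this[of A] this[of "{1..card A}"] assms show ?thesis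
    by simp
qed

lemma append_sorted_list_of_set_in_permutations:
  assumes "finite A" "B \<subseteq> A" "ys \<in> permutations_of_set (A - B)"
  shows "ys @ sorted_list_of_set B \<in> permutations_of_set A"
  using assms finite_subset[OF assms(2,1)] by (auto simp: permutations_of_set_def)

lemma take_in_permutations_of_set:
  assumes "xs \<in> permutations_of_set A"
  shows "take s xs \<in> permutations_of_set (A - set (drop s xs))"
proof -
  have "set (take s xs) \<inter> set (drop s xs) = {}" "set (take s xs) \<union> set (drop s xs) = A"
    using assms set_take_disj_set_drop_if_distinct[of xs s s] set_append[of "take s xs" "drop s xs"]
    by (auto simp: permutations_of_set_def)
  then show ?thesis
    using assms by (auto simp: permutations_of_set_def)
qed

(* A list with descents in S splits after position s into an arrangement of A - B with descents
   in S - {s}, followed by the increasing list of the remaining letters B. *)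
lemma bij_betw_split_last_block:
  assumes A: "finite A" and s: "s \<in> S" "\<forall>x\<in>S. x \<le> s" "s \<le> card A"
  shows "bij_betw (\<lambda>(B, ys). ys @ sorted_list_of_set B)
    (SIGMA B:{B. B \<subseteq> A \<and> card B = card A - s}. {ys \<in> permutations_of_set (A - B). list_descents ys \<subseteq> S - {s}})
    {xs \<in> permutations_of_set A. list_descents xs \<subseteq> S}"
    (is "bij_betw ?join ?Dom ?Lists")
proof (rule bij_betw_byWitness[where f' = "\<lambda>xs. (set (drop s xs), take s xs)"])
  have length_ys: "length ys = s" if "B \<subseteq> A" "card B = card A - s" "ys \<in> permutations_of_set (A - B)" for B ys
    using that A s(3) by (auto simp: length_finite_permutations_of_set card_Diff_subset finite_subset)
  have split_iff: "list_descents xs \<subseteq> S \<longleftrightarrow>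
      list_descents (take s xs) \<subseteq> S - {s} \<and> sorted (drop s xs)" if "xs \<in> permutations_of_set A" for xs
    using that s by (intro list_descents_subset_iff_split) (auto simp: length_finite_permutations_of_set)
  show "\<forall>a\<in>?Dom. (set (drop s (?join a)), take s (?join a)) = a"
  proof
    fix a assume "a \<in> ?Dom"
    then obtain B ys where a: "a = (B, ys)" "B \<subseteq> A" "card B = card A - s" "ys \<in> permutations_of_set (A - B)"
      by auto
    moreover have "finite B"
      using a(2) A finite_subset by blast
    ultimately show "(set (drop s (?join a)), take s (?join a)) = a"
      using length_ys by simp
  qed
  show "\<forall>xs\<in>?Lists. ?join (set (drop s xs), take s xs) = xs"
    using split_iff by (auto simp: permutations_of_set_def sorted_list_of_set_sort_remdups
        distinct_remdups_id sorted_sort_id)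
  show "?join ` ?Dom \<subseteq> ?Lists"
  proof
    fix xs assume "xs \<in> ?join ` ?Dom"
    then obtain B ys where xs: "xs = ys @ sorted_list_of_set B" and B: "B \<subseteq> A" "card B = card A - s"
      and ys: "ys \<in> permutations_of_set (A - B)" "list_descents ys \<subseteq> S - {s}"
      by auto
    have "finite B"
      using B(1) A finite_subset by blast
    then show "xs \<in> ?Lists"
      using split_iff append_sorted_list_of_set_in_permutations[OF A B(1) ys(1)] length_ys[OF B ys(1)] ys(2)
      by (simp add: xs)
  qed
  show "(\<lambda>xs. (set (drop s xs), take s xs)) ` ?Lists \<subseteq> ?Dom"
  proof
    fix a assume "a \<in> (\<lambda>xs. (set (drop s xs), take s xs)) ` ?Lists"
    then obtain xs where a: "a = (set (drop s xs), take s xs)"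
      and xs: "xs \<in> permutations_of_set A" "list_descents xs \<subseteq> S"
      by blast
    then have "set (drop s xs) \<subseteq> A" "card (set (drop s xs)) = card A - s"
      by (auto simp: permutations_of_set_def distinct_card dest: in_set_dropD)
    then show "a \<in> ?Dom"
      using xs split_iff take_in_permutations_of_set by (auto simp: a)
  qed
qed

lemma count_descents_subset_split:
  assumes "finite A" "s \<in> S" "\<forall>x\<in>S. x \<le> s" "s \<le> card A"
  shows "count_descents_subset A S =
    (\<Sum>B | B \<subseteq> A \<and> card B = card A - s. count_descents_subset (A - B) (S - {s}))"
  unfolding count_descents_subset_def
  using bij_betw_same_card[OF bij_betw_split_last_block[OF assms]] assms(1)
  by (simp add: card_SigmaI)

lemma count_descents_subset_Max:
  assumes S: "S \<subseteq> {1..<n}" "S \<noteq> {}"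
  shows "count_descents_subset {1..n} S =
    (n choose Max S) * count_descents_subset {1..Max S} (S - {Max S})"
proof -
  define s where "s = Max S"
  have "finite S"
    using S(1) finite_subset by blast
  then have s: "s \<in> S" "\<forall>x\<in>S. x \<le> s"
    using S(2) by (auto simp: s_def)
  with S(1) have "s < n"
    by auto
  let ?Blocks = "{B. B \<subseteq> {1..n} \<and> card B = n - s}"
  have "count_descents_subset {1..n} S =
        (\<Sum>B\<in>?Blocks. count_descents_subset ({1..n} - B) (S - {s}))"
    using count_descents_subset_split[of "{1..n}" s S] s \<open>s < n\<close> by simp
  also have "\<dots> = (\<Sum>B\<in>?Blocks. count_descents_subset {1..s} (S - {s}))"
  proof (rule sum.cong[OF refl])
    fix B assume B: "B \<in> ?Blocks"
    then have "finite B"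
      using finite_subset by blast
    with B \<open>s < n\<close> have "card ({1..n} - B) = s"
      by (simp add: card_Diff_subset)
    then show "count_descents_subset ({1..n} - B) (S - {s}) = count_descents_subset {1..s} (S - {s})"
      using count_descents_subset_card[of "{1..n} - B"] by simp
  qed
  also have "\<dots> = (n choose (n - s)) * count_descents_subset {1..s} (S - {s})"
    using n_subsets[of "{1..n}" "n - s"] by simp
  also have "n choose (n - s) = n choose s"
    using \<open>s < n\<close> by (simp add: binomial_symmetric[symmetric])
  finally show ?thesis
    by (simp add: s_def)
qed

section \<open>Binomial coefficients modulo a prime\<close>

lemma prime_dvd_binomial_mult:
  assumes "prime p" "\<not> p dvd k"
  shows "p dvd (p * a) choose k"
proof -
  obtain j where "k = Suc j"
    using assms(2) by (cases k) auto
  then have "k * ((p * a) choose k) = p * (a * ((p * a - 1) choose j))"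
    using binomial_absorption[of j "p * a"] by simp
  then show ?thesis
    using assms by (metis dvd_triv_left prime_dvd_mult_iff)
qed

lemma binomial_add_prime_cong:
  assumes "prime p"
  shows "[(n + p) choose k = (n choose k) + (if p \<le> k then n choose (k - p) else 0)] (mod p)"
proof -
  have summand: "[(p choose j) * (n choose (k - j)) =
        (if j = 0 then n choose k else 0) + (if j = p then n choose (k - p) else 0)] (mod p)" for j
  proof -
    have "p dvd p choose j" if "0 < j" "j < p"
      using dvd_choose_prime[of j p] that assms by auto
    then show ?thesis
      using assms by (cases "j = 0 \<or> j = p \<or> p < j") (auto simp: cong_0_iff prime_gt_0_nat binomial_eq_0)
  qed
  have "(n + p) choose k = (\<Sum>j\<le>k. (p choose j) * (n choose (k - j)))"
    using vandermonde[of p n k] by (simp add: add.commute)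
  also have "[\<dots> = (\<Sum>j\<le>k. (if j = 0 then n choose k else 0) + (if j = p then n choose (k - p) else 0))] (mod p)"
    using summand by (rule cong_sum)
  also have "(\<Sum>j\<le>k. (if j = 0 then n choose k else 0) + (if j = p then n choose (k - p) else 0)) =
             (n choose k) + (if p \<le> k then n choose (k - p) else 0)"
    by (simp add: sum.distrib)
  finally show ?thesis .
qed

lemma binomial_prime_mult_mult_cong:
  assumes "prime p"
  shows "[(p * a) choose (p * b) = a choose b] (mod p)"
proof (induction a arbitrary: b)
  case 0
  show ?case
    using assms by (cases b) (auto simp: prime_gt_0_nat binomial_eq_0)
next
  case (Suc a)
  have "[(p * Suc a) choose (p * b) =
         ((p * a) choose (p * b)) + (if p \<le> p * b then (p * a) choose (p * b - p) else 0)] (mod p)"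
    using binomial_add_prime_cong[OF assms, of "p * a" "p * b"] by (simp add: add.commute)
  also have "[((p * a) choose (p * b)) + (if p \<le> p * b then (p * a) choose (p * b - p) else 0) =
             (a choose b) + (if 0 < b then a choose (b - 1) else 0)] (mod p)"
  proof (cases "b = 0")
    case False
    then have "p \<le> p * b" "p * b - p = p * (b - 1)"
      by (simp_all add: right_diff_distrib')
    then show ?thesis
      using cong_add[OF Suc.IH[of b] Suc.IH[of "b - 1"]] False by simp
  qed (use assms in \<open>simp add: prime_gt_0_nat\<close>)
  also have "(a choose b) + (if 0 < b then a choose (b - 1) else 0) = Suc a choose b"
    by (cases b) auto
  finally show ?case .
qed

lemma binomial_prime_mult_cong:
  assumes "prime p"
  shows "[(p * a) choose k = (if p dvd k then a choose (k div p) else 0)] (mod p)"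
  using assms binomial_prime_mult_mult_cong[OF assms, of a "k div p"] prime_dvd_binomial_mult[OF assms]
  by (auto simp: cong_0_iff)

lemma binomial_prime_power_mult_cong:
  assumes "prime p"
  shows "[(p ^ d * a) choose k = (if p ^ d dvd k then a choose (k div p ^ d) else 0)] (mod p)"
proof (induction d arbitrary: a)
  case (Suc d)
  have "[(p ^ Suc d * a) choose k = (if p ^ d dvd k then (p * a) choose (k div p ^ d) else 0)] (mod p)"
    using Suc.IH[of "p * a"] by (simp add: mult.assoc mult.left_commute)
  also have "[(if p ^ d dvd k then (p * a) choose (k div p ^ d) else 0) =
              (if p ^ Suc d dvd k then a choose (k div p ^ Suc d) else 0)] (mod p)"
  proof (cases "p ^ d dvd k")
    case True
    then have iff: "p ^ Suc d dvd k \<longleftrightarrow> p dvd k div p ^ d"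
      using assms by (auto simp: dvd_div_iff_mult prime_gt_0_nat mult.commute)
    have "k div p ^ d div p = k div p ^ Suc d"
      by (simp only: power_Suc2 div_mult2_eq)
    then show ?thesis
      using True iff binomial_prime_mult_cong[OF assms, of a "k div p ^ d"] by presburger
  next
    case False
    then have "\<not> p ^ Suc d dvd k"
      using dvd_mult_left[of "p ^ d" p k] by (auto simp: power_Suc2)
    with False show ?thesis
      by simp
  qed
  finally show ?case .
qed simp

section \<open>Ribbon numbers modulo a prime\<close>

lemma count_descents_subset_prime_power_cong_0:
  assumes p: "prime p" and S: "S \<subseteq> {1..<p ^ d * a}" "\<not> S \<subseteq> range ((*) (p ^ d))"
  shows "[count_descents_subset {1..p ^ d * a} S = 0] (mod p)"
  using S
proof (induction "card S" arbitrary: S a rule: less_induct)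
  case less
  define q where "q = p ^ d"
  define s where "s = Max S"
  have "S \<noteq> {}" "finite S"
    using less.prems finite_subset by auto
  then have s: "s \<in> S" "\<And>x. x \<in> S \<Longrightarrow> x \<le> s"
    by (auto simp: s_def)
  have split: "count_descents_subset {1..q * a} S = (q * a choose s) * count_descents_subset {1..s} (S - {s})"
    using count_descents_subset_Max[OF less.prems(1)[folded q_def] \<open>S \<noteq> {}\<close>] by (simp add: s_def)
  show ?case
  proof (cases "q dvd s")
    case False
    then have "[q * a choose s = 0] (mod p)"
      using binomial_prime_power_mult_cong[OF p, of d a s] by (simp add: q_def)
    then show ?thesis
      unfolding q_def[symmetric] split using cong_scalar_right by fastforce
  next
    case True
    then obtain c where c: "s = q * c"
      by blast
    have "S - {s} \<subseteq> {1..<p ^ d * c}" "\<not> S - {s} \<subseteq> range ((*) (p ^ d))"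
      using less.prems s c by (force simp: q_def)+
    then have "[count_descents_subset {1..s} (S - {s}) = 0] (mod p)"
      using less.hyps[OF card_Diff1_less[OF \<open>finite S\<close> s(1)]] by (simp add: c q_def)
    then show ?thesis
      unfolding q_def[symmetric] split using cong_scalar_left by fastforce
  qed
qed

lemma count_descents_subset_prime_power_image_cong:
  assumes p: "prime p" and T: "T \<subseteq> {1..<a}"
  shows "[count_descents_subset {1..p ^ d * a} ((*) (p ^ d) ` T) = count_descents_subset {1..a} T] (mod p)"
  using T
proof (induction "card T" arbitrary: T a rule: less_induct)
  case less
  define q where "q = p ^ d"
  have "q > 0"
    using p by (simp add: q_def prime_gt_0_nat)
  show ?case
  proof (cases "T = {}")
    case False
    define t where "t = Max T"
    have "finite T"
      using less.prems finite_subset by blast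
    then have t: "t \<in> T" "T - {t} \<subseteq> {1..<t}"
      using False less.prems by (auto simp: t_def less_le)
    have "Max ((*) q ` T) = q * t"
      using \<open>finite T\<close> False by (simp add: t_def mono_Max_commute[symmetric] mono_def)
    moreover have "(*) q ` T - {q * t} = (*) q ` (T - {t})" "(*) q ` T \<subseteq> {1..<q * a}"
      using \<open>q > 0\<close> less.prems by auto
    ultimately have "count_descents_subset {1..q * a} ((*) q ` T) =
        (q * a choose (q * t)) * count_descents_subset {1..q * t} ((*) q ` (T - {t}))"
      using count_descents_subset_Max[of "(*) q ` T" "q * a"] False by simp
    moreover have "count_descents_subset {1..a} T = (a choose t) * count_descents_subset {1..t} (T - {t})"
      using count_descents_subset_Max[OF less.prems False] by (simp add: t_def)
    moreover have "[q * a choose (q * t) = a choose t] (mod p)"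
      using binomial_prime_power_mult_cong[OF p, of d a "q * t"] p by (simp add: q_def prime_gt_0_nat)
    moreover have "[count_descents_subset {1..q * t} ((*) q ` (T - {t})) = count_descents_subset {1..t} (T - {t})] (mod p)"
      using less.hyps[OF card_Diff1_less[OF \<open>finite T\<close> t(1)] t(2)] by (simp add: q_def)
    ultimately show ?thesis
      by (simp add: q_def cong_mult)
  qed (simp add: count_descents_subset_empty)
qed

lemma sum_Pow_subset_range:
  assumes "inj f"
  shows "(\<Sum>S\<in>{S \<in> Pow D. S \<subseteq> range f}. g S) = (\<Sum>U\<in>Pow {j. f j \<in> D}. g (f ` U))"
proof -
  have "{S \<in> Pow D. S \<subseteq> range f} = image f ` Pow {j. f j \<in> D}"
    by (auto simp: subset_image_iff image_subset_iff intro!: image_eqI)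
  moreover have "inj_on (image f) (Pow {j. f j \<in> D})"
    using assms by (auto simp: inj_on_def inj_image_eq_iff)
  ultimately show ?thesis
    by (simp add: sum.reindex)
qed

lemma sum_Pow_count_descents_subset_cong:
  fixes f :: "nat set \<Rightarrow> int"
  assumes p: "prime p" and D: "D \<subseteq> {1..<p ^ d * m}"
  shows "[(\<Sum>S\<in>Pow D. f S * int (count_descents_subset {1..p ^ d * m} S)) =
    (\<Sum>U\<in>Pow {j. p ^ d * j \<in> D}. f ((*) (p ^ d) ` U) * int (count_descents_subset {1..m} U))] (mod int p)"
proof -
  define q where "q = p ^ d"
  let ?\<alpha> = "\<lambda>S. int (count_descents_subset {1..q * m} S)"
  have "q > 0"
    using p by (simp add: q_def prime_gt_0_nat)
  then have inj: "inj ((*) q)"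
    by (simp add: inj_on_def)
  have "finite D"
    using D finite_subset by blast
  have "[(\<Sum>S\<in>Pow D. f S * ?\<alpha> S) = (\<Sum>S\<in>Pow D. if S \<subseteq> range ((*) q) then f S * ?\<alpha> S else 0)] (mod int p)"
  proof (rule cong_sum)
    fix S assume "S \<in> Pow D"
    then have "\<not> S \<subseteq> range ((*) q) \<Longrightarrow> [count_descents_subset {1..q * m} S = 0] (mod p)"
      using count_descents_subset_prime_power_cong_0[OF p, of S] D by (auto simp: q_def)
    then show "[f S * ?\<alpha> S = (if S \<subseteq> range ((*) q) then f S * ?\<alpha> S else 0)] (mod int p)"
      using cong_scalar_left[of _ 0 "int p" "f S"] by (auto simp flip: cong_int_iff)
  qed
  also have "(\<Sum>S\<in>Pow D. if S \<subseteq> range ((*) q) then f S * ?\<alpha> S else 0) =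
      (\<Sum>S\<in>{S \<in> Pow D. S \<subseteq> range ((*) q)}. f S * ?\<alpha> S)"
    using \<open>finite D\<close> by (simp only: sum.inter_filter finite_Pow_iff)
  also have "\<dots> = (\<Sum>U\<in>Pow {j. q * j \<in> D}. f ((*) q ` U) * ?\<alpha> ((*) q ` U))"
    by (rule sum_Pow_subset_range[OF inj])
  also have "[\<dots> = (\<Sum>U\<in>Pow {j. q * j \<in> D}. f ((*) q ` U) * int (count_descents_subset {1..m} U))] (mod int p)"
  proof (intro cong_sum cong_scalar_left)
    fix U assume "U \<in> Pow {j. q * j \<in> D}"
    then have "U \<subseteq> {1..<m}"
      using D \<open>q > 0\<close> by (auto simp: q_def)
    then show "[?\<alpha> ((*) q ` U) = int (count_descents_subset {1..m} U)] (mod int p)"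
      using count_descents_subset_prime_power_image_cong[OF p] by (simp add: q_def cong_int_iff)
  qed
  finally show ?thesis
    by (simp add: q_def)
qed

lemma count_descents_eq_prime_power_cong:
  assumes p: "prime p" and D: "D \<subseteq> {1..<p ^ d * m}"
  shows "[int (count_descents_eq (p ^ d * m) D) =
    (-1) ^ card (D - range ((*) (p ^ d))) * int (count_descents_eq m {j. p ^ d * j \<in> D})] (mod int p)"
proof -
  define q where "q = p ^ d"
  define T where "T = {j. q * j \<in> D}"
  have "q > 0"
    using p by (simp add: q_def prime_gt_0_nat)
  then have inj: "inj ((*) q)"
    by (simp add: inj_on_def)
  have "T \<subseteq> {1..<m}"
    using D \<open>q > 0\<close> by (auto simp: T_def q_def)
  then have "finite D" "finite T"
    using D finite_subset by auto
  have "D = (D - range ((*) q)) \<union> (*) q ` T" "(D - range ((*) q)) \<inter> (*) q ` T = {}"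
    by (auto simp: T_def)
  then have card_D: "card D = card (D - range ((*) q)) + card T"
    using \<open>finite D\<close> \<open>finite T\<close> inj by (metis card_Un_disjoint card_image finite_Diff finite_imageI
        inj_on_subset subset_UNIV)
  have sign: "(-1::int) ^ (card D - card ((*) q ` U)) = (-1) ^ card (D - range ((*) q)) * (-1) ^ (card T - card U)"
    if "U \<in> Pow T" for U
  proof -
    have "card ((*) q ` U) = card U" "card U \<le> card T"
      using that inj \<open>finite T\<close> by (auto simp: card_image inj_on_subset card_mono)
    then show ?thesis
      by (simp add: card_D power_add[symmetric])
  qed
  have "int (count_descents_eq (q * m) D) =
        (\<Sum>S\<in>Pow D. (-1) ^ (card D - card S) * int (count_descents_subset {1..q * m} S))"
    by (rule count_descents_eq_alternating_sum[OF \<open>finite D\<close>])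
  also have "[\<dots> = (\<Sum>U\<in>Pow T. (-1) ^ (card D - card ((*) q ` U)) * int (count_descents_subset {1..m} U))] (mod int p)"
    unfolding q_def T_def by (rule sum_Pow_count_descents_subset_cong[OF p D])
  also have "(\<Sum>U\<in>Pow T. (-1) ^ (card D - card ((*) q ` U)) * int (count_descents_subset {1..m} U)) =
      (-1) ^ card (D - range ((*) q)) * int (count_descents_eq m T)"
    using count_descents_eq_alternating_sum[OF \<open>finite T\<close>, of m]
    by (simp add: sign sum_distrib_left mult.assoc)
  finally show ?thesis
    by (simp add: q_def T_def)
qed

section \<open>Counting compositions\<close>

lemma card_Pow_Un_filter:
  assumes "finite A" "finite B" "A \<inter> B = {}"
  shows "card {D \<in> Pow (A \<union> B). P D} = (\<Sum>U\<in>Pow A. card {X \<in> Pow B. P (U \<union> X)})"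
proof -
  have "bij_betw (\<lambda>(U, X). U \<union> X) (SIGMA U:Pow A. {X \<in> Pow B. P (U \<union> X)}) {D \<in> Pow (A \<union> B). P D}"
    by (rule bij_betw_byWitness[where f' = "\<lambda>D. (D \<inter> A, D \<inter> B)"]) (use assms(3) in \<open>auto simp flip: Int_Un_distrib simp: Int_absorb2\<close>)
  then show ?thesis
    using assms by (simp add: bij_betw_same_card[symmetric] card_SigmaI)
qed

lemma multiples_atLeastLessThan:
  fixes q m :: nat
  assumes "0 < q"
  shows "{1..<q * m} \<inter> range ((*) q) = (*) q ` {1..<m}"
proof (intro Set.set_eqI iffI)
  fix x assume "x \<in> {1..<q * m} \<inter> range ((*) q)"
  then obtain j where "x = q * j" "1 \<le> q * j" "q * j < q * m"
    by auto
  moreover from this have "j \<in> {1..<m}"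
    using assms by (auto simp: Suc_le_eq)
  ultimately show "x \<in> (*) q ` {1..<m}"
    by blast
next
  fix x assume "x \<in> (*) q ` {1..<m}"
  then show "x \<in> {1..<q * m} \<inter> range ((*) q)"
    using assms by (auto simp: Suc_le_eq)
qed

lemma card_Pow_multiples_filter:
  fixes q m :: nat
  assumes "0 < q"
  shows "card {D \<in> Pow {1..<q * m}. P D} =
    (\<Sum>T\<in>Pow {1..<m}. card {X \<in> Pow ({1..<q * m} - range ((*) q)). P ((*) q ` T \<union> X)})"
proof -
  have "inj_on ((*) q) {1..<m}"
    using assms by (simp add: inj_on_def)
  then have "bij_betw (image ((*) q)) (Pow {1..<m}) (Pow ((*) q ` {1..<m}))"
    by (intro bij_betw_image_Pow inj_on_imp_bij_betw)
  then have "(\<Sum>U\<in>Pow ((*) q ` {1..<m}). card {X \<in> Pow ({1..<q * m} - range ((*) q)). P (U \<union> X)}) =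
    (\<Sum>T\<in>Pow {1..<m}. card {X \<in> Pow ({1..<q * m} - range ((*) q)). P ((*) q ` T \<union> X)})"
    by (rule sum.reindex_bij_betw[symmetric])
  moreover have "{1..<q * m} = (*) q ` {1..<m} \<union> ({1..<q * m} - range ((*) q))"
    using multiples_atLeastLessThan[OF assms] by blast
  ultimately show ?thesis
    using card_Pow_Un_filter[of "(*) q ` {1..<m}" "{1..<q * m} - range ((*) q)" P] by auto
qed

lemma card_non_multiples:
  fixes q m :: nat
  assumes "0 < q"
  shows "card ({1..<q * m} - range ((*) q)) = q * m - m"
proof -
  note multiples_atLeastLessThan[OF assms, of m]
  moreover have "card ((*) q ` {1..<m}) = m - 1"
    using assms by (simp add: card_image inj_on_def)
  ultimately show ?thesis
    using assms by (simp add: card_Diff_subset_Int) (cases m; simp)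
qed

lemma non_multiples_eq_empty_iff:
  fixes p m d :: nat
  assumes "prime p" "1 \<le> m"
  shows "{1..<p ^ d * m} - range ((*) (p ^ d)) = {} \<longleftrightarrow> d = 0"
proof -
  have "p ^ d > 0"
    using assms(1) by (simp add: prime_gt_0_nat)
  have "{1..<p ^ d * m} - range ((*) (p ^ d)) = {} \<longleftrightarrow> card ({1..<p ^ d * m} - range ((*) (p ^ d))) = 0"
    by simp
  also have "\<dots> \<longleftrightarrow> p ^ d * m \<le> 1 * m"
    using card_non_multiples[OF \<open>p ^ d > 0\<close>, of m] by simp
  also have "\<dots> \<longleftrightarrow> p ^ d \<le> 1"
    using assms(2) by (simp only: mult_le_cancel2) simp
  also have "\<dots> \<longleftrightarrow> d = 0"
    using prime_ge_2_nat[OF assms(1)] one_less_power[of p d] by (cases "d = 0") simp_all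
  finally show ?thesis .
qed

lemma card_even_odd_subsets:
  assumes "finite Q" "Q \<noteq> {}"
  shows "card {X \<in> Pow Q. even (card X)} = 2 ^ (card Q - 1)"
    and "card {X \<in> Pow Q. odd (card X)} = 2 ^ (card Q - 1)"
proof -
  have "{} \<subset> Q"
    using assms(2) by blast
  then have "card {X \<in> Pow Q. even (card X)} = card {X \<in> Pow Q. odd (card X)}"
    using card_subsupersets_even_odd[OF assms(1), of "{}"] by (simp add: Pow_def)
  moreover have "card {X \<in> Pow Q. even (card X)} + card {X \<in> Pow Q. odd (card X)} = 2 ^ card Q"
  proof -
    have "card ({X \<in> Pow Q. even (card X)} \<union> {X \<in> Pow Q. odd (card X)}) =
          card {X \<in> Pow Q. even (card X)} + card {X \<in> Pow Q. odd (card X)}"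
      using assms(1) by (intro card_Un_disjoint) auto
    moreover have "{X \<in> Pow Q. even (card X)} \<union> {X \<in> Pow Q. odd (card X)} = Pow Q"
      by blast
    ultimately show ?thesis
      using assms(1) by (simp add: card_Pow)
  qed
  moreover obtain k where "card Q = Suc k"
    using assms by (cases "card Q") auto
  ultimately show "card {X \<in> Pow Q. even (card X)} = 2 ^ (card Q - 1)"
    and "card {X \<in> Pow Q. odd (card X)} = 2 ^ (card Q - 1)"
    by simp_all
qed

lemma cong_minus_one_power_mult_iff:
  fixes r i m :: int
  shows "[(-1) ^ k * r = i] (mod m) \<longleftrightarrow> (if even k then [r = i] (mod m) else [r = - i] (mod m))"
proof (cases "even k")
  case False
  then show ?thesis
    by (simp add: cong_minus_minus_iff[of r "- i", symmetric])
qed simp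

lemma cong_neg_self_iff:
  assumes "prime p"
  shows "[i = - i] (mod int p) \<longleftrightarrow> [i = 0] (mod int p) \<or> p = 2"
proof -
  have "[i = - i] (mod int p) \<longleftrightarrow> int p dvd 2 * i"
    by (simp add: cong_iff_dvd_diff)
  also have "\<dots> \<longleftrightarrow> int p dvd 2 \<or> int p dvd i"
    using assms by (simp add: prime_dvd_mult_iff)
  also have "int p dvd 2 \<longleftrightarrow> p dvd 2"
    by (metis int_dvd_int_iff of_nat_numeral)
  also have "p dvd 2 \<longleftrightarrow> p = 2"
    using assms primes_dvd_imp_eq[of p 2] by auto
  finally show ?thesis
    by (auto simp: cong_0_iff)
qed

lemma card_Pow_sign_cong_sign_irrelevant:
  fixes r i :: int
  assumes "finite Q" "[i = - i] (mod int p) \<or> Q = {}"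
  shows "card {X \<in> Pow Q. [(-1) ^ card X * r = i] (mod int p)} = 2 ^ card Q * of_bool ([r = i] (mod int p))"
proof -
  have "[(-1) ^ card X * r = i] (mod int p) \<longleftrightarrow> [r = i] (mod int p)" if "X \<in> Pow Q" for X
  proof (cases "even (card X)")
    case False
    then have self: "[i = - i] (mod int p)"
      using assms(2) that by auto
    have "[r = - i] (mod int p) \<longleftrightarrow> [r = i] (mod int p)"
      using cong_trans[OF _ self] cong_trans[OF _ cong_sym[OF self]] by blast
    then show ?thesis
      using False cong_minus_one_power_mult_iff[of "card X" r i "int p"] by simp
  qed (use cong_minus_one_power_mult_iff[of "card X" r i "int p"] in simp)
  then have "{X \<in> Pow Q. [(-1) ^ card X * r = i] (mod int p)} = (if [r = i] (mod int p) then Pow Q else {})"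
    by auto
  then show ?thesis
    using assms(1) by (simp add: card_Pow)
qed

lemma card_Pow_sign_cong_parity:
  fixes r i :: int
  assumes "finite Q" "Q \<noteq> {}" "\<not> [i = - i] (mod int p)"
  shows "card {X \<in> Pow Q. [(-1) ^ card X * r = i] (mod int p)} =
    2 ^ (card Q - 1) * of_bool ([r = i] (mod int p) \<or> [r = - i] (mod int p))"
proof -
  have exclusive: "\<not> ([r = i] (mod int p) \<and> [r = - i] (mod int p))"
    using assms(3) cong_trans[OF cong_sym] by blast
  consider (plus) "[r = i] (mod int p)" | (minus) "[r = - i] (mod int p)"
    | (neither) "\<not> [r = i] (mod int p)" "\<not> [r = - i] (mod int p)"
    by blast
  then show ?thesis
  proof cases
    case plus
    then have "{X \<in> Pow Q. [(-1) ^ card X * r = i] (mod int p)} = {X \<in> Pow Q. even (card X)}"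
      using exclusive by (auto simp: cong_minus_one_power_mult_iff)
    then show ?thesis
      using plus card_even_odd_subsets(1)[OF assms(1,2)] by simp
  next
    case minus
    then have "{X \<in> Pow Q. [(-1) ^ card X * r = i] (mod int p)} = {X \<in> Pow Q. odd (card X)}"
      using exclusive by (auto simp: cong_minus_one_power_mult_iff)
    then show ?thesis
      using minus card_even_odd_subsets(2)[OF assms(1,2)] by simp
  next
    case neither
    then have empty: "{X \<in> Pow Q. [(-1) ^ card X * r = i] (mod int p)} = {}"
      by (auto simp: cong_minus_one_power_mult_iff)
    show ?thesis
      unfolding empty using neither by simp
  qed
qed

lemma card_Pow_sign_cong:
  fixes r i :: int
  assumes "finite Q"
  shows "card {X \<in> Pow Q. [(-1) ^ card X * r = i] (mod int p)} =
    (if [i = - i] (mod int p) \<or> Q = {}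
     then 2 ^ card Q * of_bool ([r = i] (mod int p))
     else 2 ^ (card Q - 1) * of_bool ([r = i] (mod int p) \<or> [r = - i] (mod int p)))"
  using card_Pow_sign_cong_sign_irrelevant[OF assms] card_Pow_sign_cong_parity[OF assms] by auto

lemma sum_const_mult_of_bool:
  fixes c :: nat
  assumes "finite A"
  shows "(\<Sum>x\<in>A. c * of_bool (P x)) = c * card {x \<in> A. P x}"
  using assms by (simp add: sum_distrib_left[symmetric] Int_def)

lemma count_descents_eq_multiples_Un_cong:
  assumes p: "prime p" and T: "T \<subseteq> {1..<m}" and X: "X \<subseteq> {1..<p ^ d * m} - range ((*) (p ^ d))"
  shows "[int (count_descents_eq (p ^ d * m) ((*) (p ^ d) ` T \<union> X)) =
    (-1) ^ card X * int (count_descents_eq m T)] (mod int p)"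
proof -
  have "p ^ d > 0"
    using p by (simp add: prime_gt_0_nat)
  then have "(*) (p ^ d) ` T \<union> X \<subseteq> {1..<p ^ d * m}" "(*) (p ^ d) ` T \<union> X - range ((*) (p ^ d)) = X"
    "{j. p ^ d * j \<in> (*) (p ^ d) ` T \<union> X} = T"
    using T X by auto
  then show ?thesis
    using count_descents_eq_prime_power_cong[OF p] by metis
qed

lemma c_count_prime_power_mult:
  assumes p: "prime p"
  shows "c_count p i (p ^ d * m) = (\<Sum>\<gamma>\<in>compositions m.
    card {X \<in> Pow ({1..<p ^ d * m} - range ((*) (p ^ d))). [(-1) ^ card X * int (ribbon \<gamma>) = i] (mod int p)})"
proof -
  define q where "q = p ^ d"
  define Q where "Q = {1..<q * m} - range ((*) q)"
  let ?count = "\<lambda>r. card {X \<in> Pow Q. [(-1) ^ card X * r = i] (mod int p)}"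
  have "q > 0"
    using p by (simp add: q_def prime_gt_0_nat)
  have "c_count p i (q * m) = card {\<alpha> \<in> compositions (q * m).
      [int (count_descents_eq (q * m) (comp_descents \<alpha>)) = i] (mod int p)}"
    unfolding c_count_def by (metis (no_types, lifting) ribbon_eq_count_descents_eq)
  also have "\<dots> = card {D \<in> Pow {1..<q * m}. [int (count_descents_eq (q * m) D) = i] (mod int p)}"
    by (rule card_filter_bij_betw[OF bij_betw_comp_descents])
  also have "\<dots> = (\<Sum>T\<in>Pow {1..<m}.
      card {X \<in> Pow Q. [int (count_descents_eq (q * m) ((*) q ` T \<union> X)) = i] (mod int p)})"
    unfolding Q_def by (rule card_Pow_multiples_filter[OF \<open>q > 0\<close>])
  also have "\<dots> = (\<Sum>T\<in>Pow {1..<m}. ?count (int (count_descents_eq m T)))"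
  proof (intro sum.cong refl arg_cong[where f = card] Collect_cong conj_cong)
    fix T X assume "T \<in> Pow {1..<m}" "X \<in> Pow Q"
    then have "[int (count_descents_eq (q * m) ((*) q ` T \<union> X)) =
        (-1) ^ card X * int (count_descents_eq m T)] (mod int p)"
      using count_descents_eq_multiples_Un_cong[OF p] by (simp add: Q_def q_def)
    then show "[int (count_descents_eq (q * m) ((*) q ` T \<union> X)) = i] (mod int p) \<longleftrightarrow>
        [(-1) ^ card X * int (count_descents_eq m T) = i] (mod int p)"
      by (meson cong_sym cong_trans)
  qed
  also have "\<dots> = (\<Sum>\<gamma>\<in>compositions m. ?count (int (count_descents_eq m (comp_descents \<gamma>))))"
    by (rule sum.reindex_bij_betw[OF bij_betw_comp_descents, symmetric])
  also have "\<dots> = (\<Sum>\<gamma>\<in>compositions m. ?count (int (ribbon \<gamma>)))"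
    by (intro sum.cong refl) (simp add: ribbon_eq_count_descents_eq)
  finally show ?thesis
    by (simp add: q_def Q_def)
qed

theorem corollary3p3:
  fixes p m d :: nat and i :: int
  assumes "prime p" and "1 \<le> m" and "m \<le> p - 1"
  defines "n \<equiv> m * p ^ d"
  shows "c_count p i n =
    (if [i = 0] (mod int p) \<or> p = 2 \<or> d = 0
     then 2 ^ (n - m) * card {\<gamma> \<in> compositions m. [int (ribbon \<gamma>) = i] (mod int p)}
     else 2 ^ (n - m - 1) * card {\<gamma> \<in> compositions m.
              [int (ribbon \<gamma>) = i] (mod int p) \<or> [int (ribbon \<gamma>) = - i] (mod int p)})"
proof -
  define Q where "Q = {1..<p ^ d * m} - range ((*) (p ^ d))"
  have n: "n = p ^ d * m"
    by (simp add: n_def)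
  have "finite Q"
    by (simp add: Q_def)
  have card_Q: "card Q = n - m"
    unfolding Q_def n by (rule card_non_multiples) (use assms(1) in \<open>simp add: prime_gt_0_nat\<close>)
  have condition: "[i = - i] (mod int p) \<or> Q = {} \<longleftrightarrow> [i = 0] (mod int p) \<or> p = 2 \<or> d = 0"
    using cong_neg_self_iff[OF assms(1)] non_multiples_eq_empty_iff[OF assms(1,2)] by (simp add: Q_def)
  have "c_count p i n = (\<Sum>\<gamma>\<in>compositions m.
      card {X \<in> Pow Q. [(-1) ^ card X * int (ribbon \<gamma>) = i] (mod int p)})"
    unfolding n Q_def by (rule c_count_prime_power_mult[OF assms(1)])
  also have "\<dots> = (\<Sum>\<gamma>\<in>compositions m.
      if [i = 0] (mod int p) \<or> p = 2 \<or> d = 0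
      then 2 ^ (n - m) * of_bool ([int (ribbon \<gamma>) = i] (mod int p))
      else 2 ^ (n - m - 1) * of_bool ([int (ribbon \<gamma>) = i] (mod int p) \<or> [int (ribbon \<gamma>) = - i] (mod int p)))"
    unfolding card_Pow_sign_cong[OF \<open>finite Q\<close>] condition card_Q ..
  finally show ?thesis
    by (cases "[i = 0] (mod int p) \<or> p = 2 \<or> d = 0")
      (simp_all only: if_True if_False sum_const_mult_of_bool finite_compositions)
qed

end
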